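(* Let $G$ be a graph and let $U$ be the set of vertices $u\in V(G)$ such that the connected component of $G$ containing $u$ is a complete graph. Then $\mu_\alpha(G)=\mu_\alpha(G-U)$.
   Context: All graphs are finite and simple; the null graph is allowed. For a graph $H$, $\alpha(H)$ is the maximum size of an independent set, $i(H)$ the minimum size of an inclusion-maximal independent set (both $0$ for the null graph), and $\mu_\alpha(H)=\alpha(H)-i(H)$. *)

theory Defs
  imports Main
begin

text \<open>A finite simple graph is given by a finite vertex set V and an edge
relation E, assumed symmetric and irreflexive; only edges between vertices of V
are relevant. Induced subgraphs (vertex deletion) are obtained by shrinking V.\<close>

definition simple_graph :: "'a set \<Rightarrow> ('a \<Rightarrow> 'a \<Rightarrow> bool) \<Rightarrow> bool" where
  "simple_graph V E \<longleftrightarrow> finite V \<and> (\<forall>x y. E x y \<longrightarrow> E y x) \<and> (\<forall>x. \<not> E x x)"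

definition indep_set :: "'a set \<Rightarrow> ('a \<Rightarrow> 'a \<Rightarrow> bool) \<Rightarrow> 'a set \<Rightarrow> bool" where
  "indep_set V E S \<longleftrightarrow> S \<subseteq> V \<and> (\<forall>x\<in>S. \<forall>y\<in>S. \<not> E x y)"

definition maximal_indep_set :: "'a set \<Rightarrow> ('a \<Rightarrow> 'a \<Rightarrow> bool) \<Rightarrow> 'a set \<Rightarrow> bool" where
  "maximal_indep_set V E S \<longleftrightarrow> indep_set V E S \<and>
     (\<forall>T. indep_set V E T \<and> S \<subseteq> T \<longrightarrow> T = S)"

definition indep_number :: "'a set \<Rightarrow> ('a \<Rightarrow> 'a \<Rightarrow> bool) \<Rightarrow> nat" where
  "indep_number V E = Max (card ` {S. indep_set V E S})"

definition indep_domination_number :: "'a set \<Rightarrow> ('a \<Rightarrow> 'a \<Rightarrow> bool) \<Rightarrow> nat" where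
  "indep_domination_number V E = Min (card ` {S. maximal_indep_set V E S})"

definition mu_alpha :: "'a set \<Rightarrow> ('a \<Rightarrow> 'a \<Rightarrow> bool) \<Rightarrow> int" where
  "mu_alpha V E = int (indep_number V E) - int (indep_domination_number V E)"

definition component :: "'a set \<Rightarrow> ('a \<Rightarrow> 'a \<Rightarrow> bool) \<Rightarrow> 'a \<Rightarrow> 'a set" where
  "component V E u = {v. (\<lambda>x y. x \<in> V \<and> y \<in> V \<and> E x y)\<^sup>*\<^sup>* u v \<and> u \<in> V \<and> v \<in> V}"

definition complete_on :: "('a \<Rightarrow> 'a \<Rightarrow> bool) \<Rightarrow> 'a set \<Rightarrow> bool" where
  "complete_on E C \<longleftrightarrow> (\<forall>x\<in>C. \<forall>y\<in>C. x \<noteq> y \<longrightarrow> E x y)"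

end

theory Submission
  imports Defs
begin

text \<open>Deleting U removes a union of connected components, and both \<alpha> and i are additive
over disjoint unions without edges between the parts; so
\<mu>(G) = \<mu>(G - U) + \<mu>(G[U]). Finally G[U] is a disjoint union of cliques, and there any
independent set S injects into any maximal independent set T: send s to a vertex of T in
its closed neighbourhood. Two vertices of S with the same image lie in one clique and would
be adjacent. Hence \<alpha>(G[U]) \<le> i(G[U]), i.e. \<mu>(G[U]) = 0.\<close>

lemma simple_graph_subset: "simple_graph V E \<Longrightarrow> W \<subseteq> V \<Longrightarrow> simple_graph W E"
  unfolding simple_graph_def by (auto intro: finite_subset)

lemma indep_set_Int: "indep_set V E S \<Longrightarrow> indep_set A E (S \<inter> A)"
  unfolding indep_set_def by auto

lemma maximal_indep_setD:
  "maximal_indep_set V E S \<Longrightarrow> indep_set V E T \<Longrightarrow> S \<subseteq> T \<Longrightarrow> T = S"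
  unfolding maximal_indep_set_def by blast

lemma finite_indep_sets: "finite V \<Longrightarrow> finite {S. indep_set V E S}"
  by (rule finite_subset[of _ "Pow V"]) (auto simp: indep_set_def)

lemma finite_maximal_indep_sets: "finite V \<Longrightarrow> finite {S. maximal_indep_set V E S}"
  by (rule rev_finite_subset[OF finite_indep_sets]) (auto simp: maximal_indep_set_def)

lemma card_le_indep_number:
  "finite V \<Longrightarrow> indep_set V E S \<Longrightarrow> card S \<le> indep_number V E"
  unfolding indep_number_def by (auto intro: Max_ge simp: finite_indep_sets)

lemma indep_number_attained:
  assumes "finite V"
  obtains S where "indep_set V E S" "card S = indep_number V E"
proof -
  have "indep_set V E {}" by (simp add: indep_set_def)
  then have "indep_number V E \<in> card ` {S. indep_set V E S}"
    unfolding indep_number_def using assms by (intro Max_in) (auto simp: finite_indep_sets)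
  then show thesis using that by auto
qed

lemma maximal_indep_set_if_maximum:
  assumes "finite V" "indep_set V E S" "card S = indep_number V E"
  shows "maximal_indep_set V E S"
  unfolding maximal_indep_set_def
proof (intro conjI allI impI \<open>indep_set V E S\<close>)
  fix T assume T: "indep_set V E T \<and> S \<subseteq> T"
  then have "finite T" using assms(1) by (auto simp: indep_set_def intro: finite_subset)
  moreover have "card T \<le> card S" using T assms by (simp add: card_le_indep_number)
  ultimately show "T = S" using T card_seteq by blast
qed

lemma indep_domination_number_le_card:
  assumes "finite V" "maximal_indep_set V E S"
  shows "indep_domination_number V E \<le> card S"
  unfolding indep_domination_number_def using assms by (auto simp: finite_maximal_indep_sets)

lemma indep_domination_number_attained:
  assumes "finite V"
  obtains S where "maximal_indep_set V E S" "card S = indep_domination_number V E"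
proof -
  obtain S0 where "indep_set V E S0" "card S0 = indep_number V E"
    using indep_number_attained[OF assms] .
  then have "maximal_indep_set V E S0" using assms maximal_indep_set_if_maximum by blast
  then have "indep_domination_number V E \<in> card ` {S. maximal_indep_set V E S}"
    unfolding indep_domination_number_def using assms
    by (intro Min_in) (auto simp: finite_maximal_indep_sets)
  then show thesis using that by auto
qed

lemma indep_domination_number_le_indep_number:
  assumes "finite V"
  shows "indep_domination_number V E \<le> indep_number V E"
proof -
  obtain S where "maximal_indep_set V E S" "card S = indep_domination_number V E"
    using indep_domination_number_attained[OF assms] .
  then show ?thesis using assms by (metis card_le_indep_number maximal_indep_set_def)
qed

lemma maximal_indep_set_dominating:
  assumes "simple_graph V E" "maximal_indep_set V E T" "x \<in> V" "x \<notin> T"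
  shows "\<exists>t\<in>T. E x t"
proof (rule ccontr)
  assume "\<not> (\<exists>t\<in>T. E x t)"
  with assms(1,3) have "indep_set V E (insert x T)"
    using assms(2) unfolding simple_graph_def maximal_indep_set_def indep_set_def by blast
  then have "insert x T = T" using maximal_indep_setD[OF assms(2)] by blast
  with assms(4) show False by blast
qed

locale separated_union =
  fixes A B :: "'a set" and E :: "'a \<Rightarrow> 'a \<Rightarrow> bool"
  assumes graph: "simple_graph (A \<union> B) E"
    and disjoint: "A \<inter> B = {}"
    and no_cross_edges: "\<forall>a\<in>A. \<forall>b\<in>B. \<not> E a b"
begin

lemma separated_union_swap: "separated_union B A E"
  using graph disjoint no_cross_edges unfolding separated_union_def simple_graph_def
  by (metis Un_commute inf_commute)

lemma finite_parts: "finite A" "finite B"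
  using graph by (auto simp: simple_graph_def)

lemma indep_set_Un:
  assumes "indep_set A E SA" "indep_set B E SB"
  shows "indep_set (A \<union> B) E (SA \<union> SB)"
  using assms graph no_cross_edges unfolding indep_set_def simple_graph_def by blast

lemma maximal_indep_set_Un:
  assumes SA: "maximal_indep_set A E SA" and SB: "maximal_indep_set B E SB"
  shows "maximal_indep_set (A \<union> B) E (SA \<union> SB)"
  unfolding maximal_indep_set_def
proof (intro conjI allI impI)
  show "indep_set (A \<union> B) E (SA \<union> SB)"
    using SA SB by (simp add: indep_set_Un maximal_indep_set_def)
next
  fix T assume T: "indep_set (A \<union> B) E T \<and> SA \<union> SB \<subseteq> T"
  have "T \<inter> A = SA"
  proof (rule maximal_indep_setD[OF SA])
    show "indep_set A E (T \<inter> A)" using T indep_set_Int by blast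
    show "SA \<subseteq> T \<inter> A" using T SA by (auto simp: maximal_indep_set_def indep_set_def)
  qed
  moreover have "T \<inter> B = SB"
  proof (rule maximal_indep_setD[OF SB])
    show "indep_set B E (T \<inter> B)" using T indep_set_Int by blast
    show "SB \<subseteq> T \<inter> B" using T SB by (auto simp: maximal_indep_set_def indep_set_def)
  qed
  moreover have "T \<subseteq> A \<union> B" using T by (simp add: indep_set_def)
  ultimately show "T = SA \<union> SB" by blast
qed

lemma maximal_indep_set_Int_left:
  assumes S: "maximal_indep_set (A \<union> B) E S"
  shows "maximal_indep_set A E (S \<inter> A)"
  unfolding maximal_indep_set_def
proof (intro conjI allI impI)
  show "indep_set A E (S \<inter> A)"
    using S indep_set_Int[of "A \<union> B" E S A] by (simp add: maximal_indep_set_def)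
next
  fix T assume T: "indep_set A E T \<and> S \<inter> A \<subseteq> T"
  have "indep_set B E (S \<inter> B)"
    using S indep_set_Int[of "A \<union> B" E S B] by (simp add: maximal_indep_set_def)
  then have "indep_set (A \<union> B) E (T \<union> S \<inter> B)" using T indep_set_Un by blast
  moreover have "S \<subseteq> A \<union> B" using S by (simp add: maximal_indep_set_def indep_set_def)
  then have "S \<subseteq> T \<union> S \<inter> B" using T by blast
  ultimately have "T \<union> S \<inter> B = S" by (rule maximal_indep_setD[OF S])
  moreover have "T \<subseteq> A" using T by (simp add: indep_set_def)
  ultimately show "T = S \<inter> A" using disjoint by blast
qed

lemma card_split:
  assumes "S \<subseteq> A \<union> B"
  shows "card S = card (S \<inter> A) + card (S \<inter> B)"
proof -
  have "finite S" using assms graph by (auto simp: simple_graph_def intro: finite_subset)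
  then have "card (S \<inter> A \<union> S \<inter> B) = card (S \<inter> A) + card (S \<inter> B)"
    using disjoint by (intro card_Un_disjoint) auto
  moreover have "S \<inter> A \<union> S \<inter> B = S" using assms by blast
  ultimately show ?thesis by simp
qed

lemma card_Un_parts:
  assumes "SA \<subseteq> A" "SB \<subseteq> B"
  shows "card (SA \<union> SB) = card SA + card SB"
proof -
  have "(SA \<union> SB) \<inter> A = SA" "(SA \<union> SB) \<inter> B = SB" using assms disjoint by auto
  then show ?thesis using card_split[of "SA \<union> SB"] assms by auto
qed

lemma maximal_indep_set_Int_right:
  "maximal_indep_set (A \<union> B) E S \<Longrightarrow> maximal_indep_set B E (S \<inter> B)"
  using separated_union.maximal_indep_set_Int_left[OF separated_union_swap]
  by (simp add: Un_commute)

lemma indep_number_Un: "indep_number (A \<union> B) E = indep_number A E + indep_number B E"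
proof (rule antisym)
  have fin: "finite (A \<union> B)" using finite_parts by simp
  obtain S where S: "indep_set (A \<union> B) E S" "card S = indep_number (A \<union> B) E"
    using indep_number_attained[OF fin] .
  have "card S = card (S \<inter> A) + card (S \<inter> B)" using S(1) by (simp add: card_split indep_set_def)
  then show "indep_number (A \<union> B) E \<le> indep_number A E + indep_number B E"
    using S finite_parts by (metis add_mono card_le_indep_number indep_set_Int)
next
  obtain SA where SA: "indep_set A E SA" "card SA = indep_number A E"
    using indep_number_attained[OF finite_parts(1)] .
  obtain SB where SB: "indep_set B E SB" "card SB = indep_number B E"
    using indep_number_attained[OF finite_parts(2)] .
  have "card (SA \<union> SB) = card SA + card SB"
    using SA SB by (intro card_Un_parts) (auto simp: indep_set_def)
  then show "indep_number A E + indep_number B E \<le> indep_number (A \<union> B) E"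
    using SA SB finite_parts by (metis card_le_indep_number finite_Un indep_set_Un)
qed

lemma indep_domination_number_Un:
  "indep_domination_number (A \<union> B) E = indep_domination_number A E + indep_domination_number B E"
proof (rule antisym)
  have fin: "finite (A \<union> B)" using finite_parts by simp
  obtain SA where SA: "maximal_indep_set A E SA" "card SA = indep_domination_number A E"
    using indep_domination_number_attained[OF finite_parts(1)] .
  obtain SB where SB: "maximal_indep_set B E SB" "card SB = indep_domination_number B E"
    using indep_domination_number_attained[OF finite_parts(2)] .
  have "card (SA \<union> SB) = card SA + card SB"
    using SA SB by (intro card_Un_parts) (auto simp: maximal_indep_set_def indep_set_def)
  then show "indep_domination_number (A \<union> B) E
               \<le> indep_domination_number A E + indep_domination_number B E"
    using SA SB fin by (metis indep_domination_number_le_card maximal_indep_set_Un)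
next
  have fin: "finite (A \<union> B)" using finite_parts by simp
  obtain S where S: "maximal_indep_set (A \<union> B) E S" "card S = indep_domination_number (A \<union> B) E"
    using indep_domination_number_attained[OF fin] .
  have "card S = card (S \<inter> A) + card (S \<inter> B)"
    using S(1) by (simp add: card_split maximal_indep_set_def indep_set_def)
  then show "indep_domination_number A E + indep_domination_number B E
               \<le> indep_domination_number (A \<union> B) E"
    using S finite_parts maximal_indep_set_Int_left maximal_indep_set_Int_right
    by (metis add_mono indep_domination_number_le_card)
qed

lemma mu_alpha_Un: "mu_alpha (A \<union> B) E = mu_alpha A E + mu_alpha B E"
  by (simp add: mu_alpha_def indep_number_Un indep_domination_number_Un)

end

lemma card_indep_set_le_card_maximal_indep_set:
  assumes graph: "simple_graph V E"
    and cliques: "\<And>x. x \<in> V \<Longrightarrow> complete_on E {y \<in> V. y = x \<or> E x y}"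
    and S: "indep_set V E S" and T: "maximal_indep_set V E T"
  shows "card S \<le> card T"
proof -
  have sym: "\<And>x y. E x y \<Longrightarrow> E y x" using graph by (simp add: simple_graph_def)
  have SV: "S \<subseteq> V" and TV: "T \<subseteq> V"
    using S T by (auto simp: maximal_indep_set_def indep_set_def)
  have "\<forall>s\<in>S. \<exists>t\<in>T. t = s \<or> E s t"
    using SV maximal_indep_set_dominating[OF graph T] by blast
  then obtain f where f: "\<And>s. s \<in> S \<Longrightarrow> f s \<in> T \<and> (f s = s \<or> E s (f s))" by metis
  have "inj_on f S"
  proof (rule inj_onI)
    fix s s' assume s: "s \<in> S" and s': "s' \<in> S" and same: "f s = f s'"
    have "f s \<in> V" using f s TV by blast
    moreover have "s \<in> {y \<in> V. y = f s \<or> E (f s) y}" "s' \<in> {y \<in> V. y = f s \<or> E (f s) y}"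
      using f[OF s] f[OF s'] s s' SV same sym by auto
    ultimately have "s = s' \<or> E s s'" using cliques unfolding complete_on_def by blast
    then show "s = s'" using S s s' by (auto simp: indep_set_def)
  qed
  moreover have "finite T" using graph TV by (auto simp: simple_graph_def intro: finite_subset)
  ultimately show ?thesis using f card_inj_on_le[of f S T] by blast
qed

lemma mu_alpha_eq_0_if_cliques:
  assumes graph: "simple_graph V E"
    and cliques: "\<And>x. x \<in> V \<Longrightarrow> complete_on E {y \<in> V. y = x \<or> E x y}"
  shows "mu_alpha V E = 0"
proof -
  have fin: "finite V" using graph by (simp add: simple_graph_def)
  obtain S where S: "indep_set V E S" "card S = indep_number V E"
    using indep_number_attained[OF fin] .
  obtain T where T: "maximal_indep_set V E T" "card T = indep_domination_number V E"
    using indep_domination_number_attained[OF fin] .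
  have "indep_number V E \<le> indep_domination_number V E"
    using card_indep_set_le_card_maximal_indep_set[OF graph cliques S(1) T(1)] S T by simp
  then show ?thesis
    using indep_domination_number_le_indep_number[OF fin, of E] by (simp add: mu_alpha_def)
qed

lemma self_in_component: "u \<in> V \<Longrightarrow> u \<in> component V E u"
  unfolding component_def by simp

lemma neighbour_in_component: "u \<in> V \<Longrightarrow> w \<in> V \<Longrightarrow> E u w \<Longrightarrow> w \<in> component V E u"
  unfolding component_def by auto

lemma component_eq_if_edge:
  assumes "simple_graph V E" "u \<in> V" "w \<in> V" "E u w"
  shows "component V E w = component V E u"
proof -
  let ?R = "\<lambda>x y. x \<in> V \<and> y \<in> V \<and> E x y"
  have "?R u w" "?R w u" using assms by (auto simp: simple_graph_def)
  then show ?thesis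
    unfolding component_def using assms(2,3) by (auto intro: converse_rtranclp_into_rtranclp)
qed

theorem corollary3:
  fixes V :: "'a set" and E :: "'a \<Rightarrow> 'a \<Rightarrow> bool"
  assumes "simple_graph V E"
  defines "U \<equiv> {u \<in> V. complete_on E (component V E u)}"
  shows "mu_alpha V E = mu_alpha (V - U) E"
proof -
  have no_cross_edges: "\<forall>w\<in>V - U. \<forall>u\<in>U. \<not> E w u"
    using component_eq_if_edge[OF assms(1)] unfolding U_def by fastforce
  have cliques: "complete_on E {y \<in> U. y = x \<or> E x y}" if "x \<in> U" for x
  proof -
    have "{y \<in> U. y = x \<or> E x y} \<subseteq> component V E x"
      using that self_in_component neighbour_in_component unfolding U_def by fastforce
    then show ?thesis using that unfolding U_def complete_on_def by blast
  qed
  have V: "V = (V - U) \<union> U" by (auto simp: U_def)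
  interpret separated_union "V - U" U E
    using assms(1) no_cross_edges V by unfold_locales auto
  have "mu_alpha V E = mu_alpha (V - U) E + mu_alpha U E"
    using mu_alpha_Un V by simp
  moreover have "mu_alpha U E = 0"
    using mu_alpha_eq_0_if_cliques[OF simple_graph_subset[OF assms(1)] cliques] by (auto simp: U_def)
  ultimately show ?thesis by simp
qed

end
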